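(* Let $G$ be a left-orderable group and let $\preceq$ be a left-ordering of $G$ that is an isolated point of $\mathcal{LO}(G)$ and is not Conradian. Let $C=C_\preceq(G)$ be its Conradian soul, which admits only finitely many left-orderings $\preceq_1,\dots,\preceq_{2^n}$ (with $\preceq_1$ the restriction of $\preceq$ to $C$), and for each $j$ let $\preceq^j$ be the left-ordering of $G$ defined by $g\succ^j id$ iff either $g\notin C$ and $g\succ id$, or $g\in C$ and $g\succ_j id$. Then at least one of the left-orderings $\preceq^j$ is an accumulation point of the set of conjugates $\{\preceq_h:h\in G\}$ of $\preceq$.
   Context: A left-ordering is a total order invariant under left multiplication; it is Conradian if for all $f\succ id$, $g\succ id$ there is $n\in\mathbb{N}$ with $fg^n\succ g$. The Conradian soul $C_\preceq(G)$ is the maximal $\preceq$-convex subgroup on which $\preceq$ restricts to a Conradian ordering. The conjugate $\preceq_h$ is defined by $g\succ_h id$ iff $hgh^{-1}\succ id$. $\mathcal{LO}(G)$ carries the topology whose basic neighbourhoods of an ordering are the sets of left-orderings agreeing with it on a given finite subset of $G$. *)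

theory Defs
  imports Main
begin

text \<open>The group G is a type of class group_add (written additively, not necessarily
commutative): x + y is the group product xy, 0 is id, -x is the inverse.\<close>

definition left_ordering_on :: "'g::group_add set \<Rightarrow> ('g \<Rightarrow> 'g \<Rightarrow> bool) \<Rightarrow> bool" where
  "left_ordering_on H R \<longleftrightarrow>
     (\<forall>x\<in>H. \<not> R x x) \<and>
     (\<forall>x\<in>H. \<forall>y\<in>H. \<forall>z\<in>H. R x y \<longrightarrow> R y z \<longrightarrow> R x z) \<and>
     (\<forall>x\<in>H. \<forall>y\<in>H. x \<noteq> y \<longrightarrow> R x y \<or> R y x) \<and>
     (\<forall>g\<in>H. \<forall>x\<in>H. \<forall>y\<in>H. R x y \<longrightarrow> R (g + x) (g + y))"

abbreviation left_ordering :: "('g::group_add \<Rightarrow> 'g \<Rightarrow> bool) \<Rightarrow> bool" where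
  "left_ordering R \<equiv> left_ordering_on UNIV R"

text \<open>Basic neighbourhoods in LO(G): orderings agreeing on a finite set F
(same set of positive elements among F).\<close>
definition agree_on :: "'g::group_add set \<Rightarrow> ('g \<Rightarrow> 'g \<Rightarrow> bool) \<Rightarrow> ('g \<Rightarrow> 'g \<Rightarrow> bool) \<Rightarrow> bool" where
  "agree_on F R S \<longleftrightarrow> (\<forall>g\<in>F. R 0 g \<longleftrightarrow> S 0 g)"

definition isolated_ordering :: "('g::group_add \<Rightarrow> 'g \<Rightarrow> bool) \<Rightarrow> bool" where
  "isolated_ordering R \<longleftrightarrow>
     (\<exists>F. finite F \<and> (\<forall>S. left_ordering S \<and> agree_on F R S \<longrightarrow> S = R))"

definition accumulation_ordering ::
  "('g::group_add \<Rightarrow> 'g \<Rightarrow> bool) \<Rightarrow> ('g \<Rightarrow> 'g \<Rightarrow> bool) set \<Rightarrow> bool" where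
  "accumulation_ordering R A \<longleftrightarrow>
     (\<forall>F. finite F \<longrightarrow> (\<exists>S\<in>A. S \<noteq> R \<and> agree_on F R S))"

definition gpow :: "'g::group_add \<Rightarrow> nat \<Rightarrow> 'g" where
  "gpow g n = ((\<lambda>x. x + g) ^^ n) 0"

definition conradian_on :: "('g::group_add \<Rightarrow> 'g \<Rightarrow> bool) \<Rightarrow> 'g set \<Rightarrow> bool" where
  "conradian_on R H \<longleftrightarrow>
     (\<forall>f\<in>H. \<forall>g\<in>H. R 0 f \<longrightarrow> R 0 g \<longrightarrow> (\<exists>n::nat. n \<ge> 1 \<and> R g (f + gpow g n)))"

definition is_subgroup :: "'g::group_add set \<Rightarrow> bool" where
  "is_subgroup H \<longleftrightarrow> 0 \<in> H \<and> (\<forall>x\<in>H. \<forall>y\<in>H. x + y \<in> H) \<and> (\<forall>x\<in>H. - x \<in> H)"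

definition convex_subgroup :: "('g::group_add \<Rightarrow> 'g \<Rightarrow> bool) \<Rightarrow> 'g set \<Rightarrow> bool" where
  "convex_subgroup R C \<longleftrightarrow> is_subgroup C \<and>
     (\<forall>a\<in>C. \<forall>b\<in>C. \<forall>g. R a g \<and> R g b \<longrightarrow> g \<in> C)"

definition conradian_soul :: "('g::group_add \<Rightarrow> 'g \<Rightarrow> bool) \<Rightarrow> 'g set \<Rightarrow> bool" where
  "conradian_soul R C \<longleftrightarrow> convex_subgroup R C \<and> conradian_on R C \<and>
     (\<forall>D. convex_subgroup R D \<and> conradian_on R D \<and> C \<subseteq> D \<longrightarrow> D = C)"

text \<open>Conjugate ordering: g \<succ>_h id iff h g h^-1 \<succ> id; as a left-ordering,
x \<prec>_h y iff id \<prec>_h x^-1 y.\<close>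
definition conj_ord :: "('g::group_add \<Rightarrow> 'g \<Rightarrow> bool) \<Rightarrow> 'g \<Rightarrow> 'g \<Rightarrow> 'g \<Rightarrow> bool" where
  "conj_ord R h x y \<longleftrightarrow> R 0 (h + (- x + y) + - h)"

definition ext_ord :: "('g::group_add \<Rightarrow> 'g \<Rightarrow> bool) \<Rightarrow> 'g set \<Rightarrow> ('g \<Rightarrow> 'g \<Rightarrow> bool) \<Rightarrow> 'g \<Rightarrow> 'g \<Rightarrow> bool" where
  "ext_ord R C Rc x y \<longleftrightarrow> ((- x + y) \<notin> C \<and> R 0 (- x + y)) \<or> ((- x + y) \<in> C \<and> Rc 0 (- x + y))"

end

theory Submission
  imports Defs
begin

text \<open>
  Write \<open>\<prec>\<^sup>p\<close> for the conjugate ordering with \<open>id \<prec>\<^sup>p g\<close> iff \<open>p \<prec> g p\<close>.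
  For positive \<open>p\<close> smaller than every element of a finite set \<open>F\<close> outside the Conradian
  soul \<open>C\<close> (in absolute value), \<open>\<prec>\<^sup>p\<close> agrees with \<open>\<prec>\<close> on \<open>F - C\<close>. On the other hand,
  below every positive \<open>m \<notin> C\<close> there is a \<open>p \<notin> C\<close> for which \<open>\<prec>\<^sup>p\<close> changes the sign
  of some element outside \<open>C\<close>: otherwise either a convex subgroup strictly above \<open>C\<close> misses
  \<open>m\<close>, and the element below \<open>m\<close> witnessing that it is not Conradian would have to change a
  sign, or all these \<open>p\<close> normalise both \<open>C\<close> and the positive cone outside \<open>C\<close>, and the
  largest convex subgroup inside this normaliser is Conradian and strictly larger than \<open>C\<close>.
  By compactness (an ultrafilter on \<open>G\<close>) the sign functions of such conjugates have a
  limit that is approximated on every finite set. On \<open>C\<close> it is a left-ordering, and its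
  extension by \<open>\<prec>\<close> outside \<open>C\<close> is approximated by conjugates that differ from it.
\<close>

declare add_uminus_conv_diff[simp del]

lemma subgroup_zero: "is_subgroup H \<Longrightarrow> 0 \<in> H"
  and subgroup_add: "is_subgroup H \<Longrightarrow> x \<in> H \<Longrightarrow> y \<in> H \<Longrightarrow> x + y \<in> H"
  and subgroup_neg: "is_subgroup H \<Longrightarrow> x \<in> H \<Longrightarrow> - x \<in> H"
  unfolding is_subgroup_def by blast+

lemma subgroup_neg_iff: "is_subgroup H \<Longrightarrow> - x \<in> H \<longleftrightarrow> x \<in> H"
  using subgroup_neg[of H x] subgroup_neg[of H "- x"] by auto

lemma subgroup_add_left_iff: "is_subgroup H \<Longrightarrow> c \<in> H \<Longrightarrow> c + x \<in> H \<longleftrightarrow> x \<in> H"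
  using subgroup_add[of H "- c" "c + x"] subgroup_add[of H c x] subgroup_neg[of H c]
  by (auto simp: add.assoc[symmetric])

lemma subgroup_add_right_iff: "is_subgroup H \<Longrightarrow> c \<in> H \<Longrightarrow> x + c \<in> H \<longleftrightarrow> x \<in> H"
  using subgroup_add[of H "x + c" "- c"] subgroup_add[of H x c] subgroup_neg[of H c]
  by (auto simp: add.assoc)

lemma subgroup_conj_preimage:
  assumes H: "is_subgroup H"
  shows "is_subgroup {y. a + y + - a \<in> H}"
  unfolding is_subgroup_def
proof (intro conjI ballI)
  show "0 \<in> {y. a + y + - a \<in> H}" using subgroup_zero[OF H] by simp
next
  fix x y assume "x \<in> {y. a + y + - a \<in> H}" "y \<in> {y. a + y + - a \<in> H}"
  then have "(a + x + - a) + (a + y + - a) \<in> H" using subgroup_add[OF H] by simp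
  then show "x + y \<in> {y. a + y + - a \<in> H}" by (simp add: add.assoc)
next
  fix x assume "x \<in> {y. a + y + - a \<in> H}"
  then have "- (a + x + - a) \<in> H" using subgroup_neg[OF H] by simp
  then show "- x \<in> {y. a + y + - a \<in> H}" by (simp add: add.assoc minus_add)
qed

lemma left_ordering_of_cone:
  fixes P :: "'g::group_add \<Rightarrow> bool"
  assumes "\<not> P 0" and "\<And>a b. P a \<Longrightarrow> P b \<Longrightarrow> P (a + b)"
    and "\<And>a. a \<noteq> 0 \<Longrightarrow> P a \<or> P (- a)"
  shows "left_ordering_on H (\<lambda>x y. P (- x + y))"
  unfolding left_ordering_on_def
proof (intro conjI ballI impI)
  fix x y z :: 'g
  show "\<not> P (- x + x)" using assms(1) by simp
  assume "P (- x + y)" "P (- y + z)"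
  then have "P ((- x + y) + (- y + z))" by (rule assms(2))
  then show "P (- x + z)" by (simp add: add.assoc)
next
  fix x y :: 'g assume "x \<noteq> y"
  then have "- x + y \<noteq> 0" by (metis add.left_inverse add_left_cancel)
  moreover have "- (- x + y) = - y + x" by (simp add: minus_add)
  ultimately show "P (- x + y) \<or> P (- y + x)" using assms(3) by metis
next
  fix g x y :: 'g assume "P (- x + y)"
  then show "P (- (g + x) + (g + y))" by (simp add: minus_add add.assoc)
qed

section \<open>Ultrafilters\<close>

definition fip :: "'a set set \<Rightarrow> bool" where
  "fip M \<longleftrightarrow> (\<forall>F. F \<subseteq> M \<longrightarrow> finite F \<longrightarrow> \<Inter>F \<noteq> {})"

lemma fipD: "fip M \<Longrightarrow> F \<subseteq> M \<Longrightarrow> finite F \<Longrightarrow> \<Inter>F \<noteq> {}"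
  unfolding fip_def by blast

lemma fip_Union_chain:
  assumes "Ch \<in> chains {M. fip M}" "Ch \<noteq> {}"
  shows "fip (\<Union>Ch)"
  unfolding fip_def
proof (intro allI impI)
  fix F assume F: "F \<subseteq> \<Union>Ch" "finite F"
  have "subset.chain UNIV Ch" using assms(1) unfolding chains_def chain_subset_alt_def by auto
  then obtain M where "M \<in> Ch" "F \<subseteq> M"
    using finite_subset_Union_chain[OF F(2,1) assms(2)] by blast
  then show "\<Inter>F \<noteq> {}" using assms(1) F(2) fipD unfolding chains_def by blast
qed

lemma maximal_fip_decides:
  assumes M: "fip M" and max: "\<And>N. fip N \<Longrightarrow> M \<subseteq> N \<Longrightarrow> N = M"
  shows "X \<in> M \<or> - X \<in> M"
proof (rule ccontr)
  assume nX: "\<not> (X \<in> M \<or> - X \<in> M)"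
  have "\<exists>F. F \<subseteq> M \<and> finite F \<and> \<Inter>(insert Y F) = {}" if "Y \<notin> M" for Y
  proof -
    have "\<not> fip (insert Y M)" using max[of "insert Y M"] that by blast
    then obtain F where "F \<subseteq> insert Y M" "finite F" "\<Inter>F = {}" unfolding fip_def by blast
    then show ?thesis by (intro exI[of _ "F - {Y}"]) auto
  qed
  then obtain F1 F2 where F: "F1 \<subseteq> M" "finite F1" "\<Inter>(insert X F1) = {}"
    "F2 \<subseteq> M" "finite F2" "\<Inter>(insert (- X) F2) = {}"
    using nX by meson
  then have "\<Inter>(F1 \<union> F2) \<noteq> {}" using fipD[OF M, of "F1 \<union> F2"] by blast
  then show False using F by blast
qed

lemma ultrafilter_extension:
  assumes B: "fip B"
  shows "\<exists>M. B \<subseteq> M \<and> fip M \<and> (\<forall>X. X \<in> M \<or> - X \<in> M)"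
proof -
  define \<A> where "\<A> = {M. B \<subseteq> M \<and> fip M}"
  have "\<forall>Ch\<in>chains \<A>. \<exists>U\<in>\<A>. \<forall>X\<in>Ch. X \<subseteq> U"
  proof
    fix Ch assume Ch: "Ch \<in> chains \<A>"
    show "\<exists>U\<in>\<A>. \<forall>X\<in>Ch. X \<subseteq> U"
    proof (cases "Ch = {}")
      case True
      have "B \<in> \<A>" using B unfolding \<A>_def by blast
      then show ?thesis using True by blast
    next
      case False
      have "Ch \<subseteq> \<A>" using Ch unfolding chains_def by blast
      moreover have "Ch \<in> chains {M. fip M}" using Ch unfolding chains_def \<A>_def by blast
      then have "fip (\<Union>Ch)" using fip_Union_chain False by blast
      ultimately have "\<Union>Ch \<in> \<A>" using False unfolding \<A>_def by blast
      then show ?thesis by blast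
    qed
  qed
  then obtain M where M: "M \<in> \<A>" and max: "\<forall>N\<in>\<A>. M \<subseteq> N \<longrightarrow> N = M"
    using Zorn_Lemma2 by blast
  have "fip M" "B \<subseteq> M" using M unfolding \<A>_def by blast+
  moreover have "N = M" if "fip N" "M \<subseteq> N" for N
    using max that \<open>B \<subseteq> M\<close> unfolding \<A>_def by blast
  ultimately show ?thesis using maximal_fip_decides by blast
qed

lemma exists_finitely_approximated_limit:
  fixes A :: "'a set \<Rightarrow> 'p set" and T :: "'p \<Rightarrow> 'a \<Rightarrow> bool"
  assumes nonempty: "\<And>F. finite F \<Longrightarrow> A F \<noteq> {}"
    and antimono: "\<And>F F'. F \<subseteq> F' \<Longrightarrow> A F' \<subseteq> A F"
  shows "\<exists>\<tau>. \<forall>F. finite F \<longrightarrow> (\<exists>p\<in>A F. \<forall>g\<in>F. T p g \<longleftrightarrow> \<tau> g)"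
proof -
  have "fip (A ` {F. finite F})"
    unfolding fip_def
  proof (intro allI impI)
    fix \<F> assume "\<F> \<subseteq> A ` {F. finite F}" "finite \<F>"
    then obtain \<G> where \<G>: "\<G> \<subseteq> {F. finite F}" "finite \<G>" "\<F> = A ` \<G>"
      using finite_subset_image by metis
    then have "A (\<Union>\<G>) \<subseteq> \<Inter>\<F>" using antimono by blast
    moreover have "finite (\<Union>\<G>)" using \<G> by blast
    ultimately show "\<Inter>\<F> \<noteq> {}" using nonempty by blast
  qed
  then obtain M where M: "A ` {F. finite F} \<subseteq> M" "fip M" "\<forall>X. X \<in> M \<or> - X \<in> M"
    using ultrafilter_extension by blast
  define \<tau> where "\<tau> g \<longleftrightarrow> {p. T p g} \<in> M" for g
  have agree_in_M: "{p. T p g \<longleftrightarrow> \<tau> g} \<in> M" for g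
  proof (cases "\<tau> g")
    case True
    then show ?thesis unfolding \<tau>_def by simp
  next
    case False
    then have "- {p. T p g} \<in> M" using M(3) unfolding \<tau>_def by blast
    moreover have "- {p. T p g} = {p. T p g \<longleftrightarrow> \<tau> g}" using False by auto
    ultimately show ?thesis by simp
  qed
  have "\<exists>p\<in>A F. \<forall>g\<in>F. T p g \<longleftrightarrow> \<tau> g" if F: "finite F" for F
  proof -
    have "insert (A F) ((\<lambda>g. {p. T p g \<longleftrightarrow> \<tau> g}) ` F) \<subseteq> M" using M(1) F agree_in_M by blast
    then have "\<Inter>(insert (A F) ((\<lambda>g. {p. T p g \<longleftrightarrow> \<tau> g}) ` F)) \<noteq> {}"
      using fipD[OF M(2)] F by blast
    then show ?thesis by blast
  qed
  then show ?thesis by blast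
qed

section \<open>Left-ordered groups and convex cores\<close>

locale left_ordered_group =
  fixes R :: "'a::group_add \<Rightarrow> 'a \<Rightarrow> bool"
  assumes left_ordering: "left_ordering R"
begin

lemma ord_irrefl: "\<not> R x x"
  and ord_trans: "R x y \<Longrightarrow> R y z \<Longrightarrow> R x z"
  and ord_linear: "x \<noteq> y \<Longrightarrow> R x y \<or> R y x"
  and ord_add_left: "R x y \<Longrightarrow> R (g + x) (g + y)"
  using left_ordering unfolding left_ordering_on_def by blast+

lemma ord_asym: "R x y \<Longrightarrow> \<not> R y x"
  using ord_trans ord_irrefl by blast

lemma ord_add_left_iff: "R (g + x) (g + y) \<longleftrightarrow> R x y"
  using ord_add_left[of "g + x" "g + y" "- g"] ord_add_left[of x y g]
  by (auto simp: add.assoc[symmetric])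

lemma ord_neg_pos: "R x 0 \<Longrightarrow> R 0 (- x)"
  using ord_add_left[of x 0 "- x"] by simp

definition le :: "'a \<Rightarrow> 'a \<Rightarrow> bool" where
  "le a b \<longleftrightarrow> R a b \<or> a = b"

definition between :: "'a \<Rightarrow> 'a \<Rightarrow> 'a \<Rightarrow> bool" where
  "between a y b \<longleftrightarrow> (le a y \<and> le y b) \<or> (le b y \<and> le y a)"

lemma le_add_left: "le x y \<Longrightarrow> le (g + x) (g + y)"
  unfolding le_def using ord_add_left by blast

lemma le_trans: "le x y \<Longrightarrow> le y z \<Longrightarrow> le x z"
  unfolding le_def using ord_trans by blast

lemma le_antisym: "le x y \<Longrightarrow> le y x \<Longrightarrow> x = y"
  unfolding le_def using ord_asym by blast

lemma le_total: "le x y \<or> le y x"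
  unfolding le_def using ord_linear by blast

lemma finite_has_least:
  assumes "finite S" "S \<noteq> {}"
  shows "\<exists>m\<in>S. \<forall>s\<in>S. le m s"
  using assms
proof (induction S rule: finite_ne_induct)
  case (singleton x)
  then show ?case unfolding le_def by simp
next
  case (insert x S)
  then obtain m where "m \<in> S" "\<forall>s\<in>S. le m s" by blast
  then show ?case using le_total[of x m] le_trans le_total[of x x] by blast
qed

lemma between_add_left: "between a y b \<Longrightarrow> between (g + a) (g + y) (g + b)"
  unfolding between_def using le_add_left by blast

lemma between_sym: "between a y b \<longleftrightarrow> between b y a"
  unfolding between_def by blast

lemma between_split: "between a y b \<Longrightarrow> between a y c \<or> between c y b"
  unfolding between_def using le_total le_trans by blast

lemma between_right: "between a b b"
  unfolding between_def le_def using ord_linear by blast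

lemma between_same: "between a y a \<Longrightarrow> y = a"
  unfolding between_def using le_antisym by blast

text \<open>For a subgroup \<open>H\<close>, the largest convex subgroup contained in \<open>H\<close>.\<close>
definition convex_core :: "'a set \<Rightarrow> 'a set" where
  "convex_core H = {x. \<forall>y. between 0 y x \<longrightarrow> y \<in> H}"

lemma convex_core_subset: "convex_core H \<subseteq> H"
  unfolding convex_core_def using between_right by blast

lemma mem_convex_coreI:
  assumes H: "is_subgroup H" and t: "R 0 t" "t \<in> H"
    and interval: "\<And>y. R 0 y \<Longrightarrow> R y t \<Longrightarrow> y \<in> H"
  shows "t \<in> convex_core H"
proof -
  have "y \<in> H" if "between 0 y t" for y
  proof -
    have "y = 0 \<or> y = t \<or> (R 0 y \<and> R y t)"
      using that t ord_asym ord_trans unfolding between_def le_def by blast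
    then show ?thesis using subgroup_zero[OF H] t interval by blast
  qed
  then show ?thesis unfolding convex_core_def by blast
qed

lemma convex_core_neg:
  assumes H: "is_subgroup H" and x: "x \<in> convex_core H"
  shows "- x \<in> convex_core H"
proof -
  have "y \<in> H" if "between 0 y (- x)" for y
  proof -
    have "between 0 (x + y) x"
      using between_add_left[OF that, of x] between_sym by simp
    then have "x + y \<in> H" using x unfolding convex_core_def by blast
    then show ?thesis using subgroup_add_left_iff[OF H] x convex_core_subset by blast
  qed
  then show ?thesis unfolding convex_core_def by blast
qed

lemma convex_core_add:
  assumes H: "is_subgroup H" and x: "x \<in> convex_core H" and y: "y \<in> convex_core H"
  shows "x + y \<in> convex_core H"
proof -
  have "z \<in> H" if "between 0 z (x + y)" for z
  proof -
    have "between (- x) (- x + z) y"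
      using between_add_left[OF that, of "- x"] by (simp add: add.assoc[symmetric])
    then have "between (- x) (- x + z) 0 \<or> between 0 (- x + z) y" by (rule between_split)
    then have "- x + z \<in> H"
      using convex_core_neg[OF H x] y between_sym unfolding convex_core_def by blast
    then show ?thesis
      using subgroup_add_left_iff[OF H, of "- x"] subgroup_neg[OF H] x convex_core_subset by blast
  qed
  then show ?thesis unfolding convex_core_def by blast
qed

lemma convex_subgroup_convex_core:
  assumes H: "is_subgroup H"
  shows "convex_subgroup R (convex_core H)"
proof -
  have "0 \<in> convex_core H"
    using between_same subgroup_zero[OF H] unfolding convex_core_def by blast
  moreover have "g \<in> convex_core H"
    if "a \<in> convex_core H" "b \<in> convex_core H" "R a g" "R g b" for a b g
  proof -
    have "between 0 y b \<or> between 0 y a" if "between 0 y g" for y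
      using that \<open>R a g\<close> \<open>R g b\<close> ord_trans unfolding between_def le_def by blast
    then show ?thesis using that unfolding convex_core_def by blast
  qed
  ultimately show ?thesis
    unfolding convex_subgroup_def is_subgroup_def
    using convex_core_add[OF H] convex_core_neg[OF H] by blast
qed

end

locale soul_ordered_group = left_ordered_group +
  fixes C :: "'a set"
  assumes soul: "conradian_soul R C"
begin

lemma soul_subgroup: "is_subgroup C"
  and soul_conradian: "conradian_on R C"
  and soul_convex: "a \<in> C \<Longrightarrow> b \<in> C \<Longrightarrow> R a g \<Longrightarrow> R g b \<Longrightarrow> g \<in> C"
  and soul_maximal: "convex_subgroup R D \<Longrightarrow> conradian_on R D \<Longrightarrow> C \<subseteq> D \<Longrightarrow> D = C"
  using soul unfolding conradian_soul_def convex_subgroup_def by blast+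

lemmas soul_zero = subgroup_zero[OF soul_subgroup]
  and soul_neg = subgroup_neg[OF soul_subgroup]
  and soul_neg_iff = subgroup_neg_iff[OF soul_subgroup]
  and soul_add_left_iff = subgroup_add_left_iff[OF soul_subgroup]
  and soul_add_right_iff = subgroup_add_right_iff[OF soul_subgroup]

lemma soul_less_outer_pos: "z \<notin> C \<Longrightarrow> R 0 z \<Longrightarrow> c \<in> C \<Longrightarrow> R c z"
  using soul_convex[of 0 c z] soul_zero ord_linear[of c z] by blast

lemma outer_neg_less_soul: "z \<notin> C \<Longrightarrow> R z 0 \<Longrightarrow> c \<in> C \<Longrightarrow> R z c"
  using soul_convex[of c 0 z] soul_zero ord_linear[of c z] by blast

lemma outer_pos_add_soul_right:
  assumes x: "x \<notin> C" "R 0 x" and c: "c \<in> C"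
  shows "R 0 (x + c)"
proof (rule ccontr)
  have xc: "x + c \<notin> C" using x c soul_add_right_iff by blast
  assume "\<not> R 0 (x + c)"
  then have "R (x + c) 0" using ord_linear xc soul_zero by force
  then have "R c (- x)" using ord_add_left[of "x + c" 0 "- x"] by (simp add: add.assoc[symmetric])
  moreover have "R (- x) 0" using ord_add_left[OF x(2), of "- x"] by simp
  ultimately show False using outer_neg_less_soul[of "- x" c] x c soul_neg_iff ord_asym by blast
qed

lemma soul_less_outer_coset:
  "x \<notin> C \<Longrightarrow> R 0 x \<Longrightarrow> c \<in> C \<Longrightarrow> c' \<in> C \<Longrightarrow> R c' (x + c)"
  using outer_pos_add_soul_right soul_less_outer_pos soul_add_right_iff by blast

lemma outer_pos_add_soul_left: "g \<notin> C \<Longrightarrow> R 0 g \<Longrightarrow> f \<in> C \<Longrightarrow> R 0 (f + g)"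
  using soul_less_outer_pos[of g "- f"] soul_neg ord_add_left[of "- f" g f]
  by (simp add: add.assoc[symmetric])

lemma soul_subset_convex_core:
  assumes "C \<subseteq> H"
  shows "C \<subseteq> convex_core H"
proof
  fix c assume c: "c \<in> C"
  have "y \<in> C" if "between 0 y c" for y
    using that soul_convex[of 0 c y] soul_convex[of c 0 y] soul_zero c
    unfolding between_def le_def by blast
  then show "c \<in> convex_core H" using assms unfolding convex_core_def by blast
qed

definition magnitude :: "'a \<Rightarrow> 'a" where
  "magnitude g = (if R 0 g then g else - g)"

lemma magnitude_pos: "g \<noteq> 0 \<Longrightarrow> R 0 (magnitude g)"
  unfolding magnitude_def using ord_linear ord_neg_pos by auto

lemma magnitude_outer: "g \<notin> C \<Longrightarrow> magnitude g \<notin> C"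
  unfolding magnitude_def using soul_neg_iff by auto

lemma conj_sign_eq_if_small:
  assumes p: "R 0 p" "le p (magnitude g)" and g: "g \<noteq> 0"
  shows "R p (g + p) \<longleftrightarrow> R 0 g"
proof (cases "R 0 g")
  case True
  then have "le p g" using p unfolding magnitude_def by simp
  moreover have "R g (g + p)" using ord_add_left[OF p(1), of g] by simp
  ultimately show ?thesis using True ord_trans unfolding le_def by blast
next
  case False
  then have "le p (- g)" using p unfolding magnitude_def by simp
  moreover have "R (- g) (- g + p)" using ord_add_left[OF p(1), of "- g"] by simp
  ultimately have "R p (- g + p)" using ord_trans unfolding le_def by blast
  then have "R (g + p) p" using ord_add_left[of p "- g + p" g] by (simp add: add.assoc[symmetric])
  then show ?thesis using False ord_asym by blast
qed

section \<open>Conjugations changing signs outside the soul\<close>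

text \<open>By \<open>conj_ord_zero_iff\<close> below, this says that the conjugate ordering
  \<open>conj_ord R (- p)\<close> agrees with \<open>R\<close> outside the soul.\<close>
definition preserves_outer_signs :: "'a \<Rightarrow> bool" where
  "preserves_outer_signs p \<longleftrightarrow> (\<forall>g. g \<notin> C \<longrightarrow> (R p (g + p) \<longleftrightarrow> R 0 g))"

lemma conradian_step:
  assumes f: "R 0 f" and g: "R 0 g"
    and gC: "g \<in> C \<or> (\<forall>h. h \<notin> C \<longrightarrow> R 0 h \<longrightarrow> R g (h + g))"
  shows "\<exists>n\<ge>1. R g (f + gpow g n)"
proof -
  have step1: "\<exists>n\<ge>1. R g (f + gpow g n)" if "R g (f + g)"
    using that by (intro exI[of _ 1]) (simp add: gpow_def)
  have step2: "\<exists>n\<ge>1. R g (f + gpow g n)" if "R g (f + g + g)"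
    using that by (intro exI[of _ 2]) (simp add: gpow_def numeral_2_eq_2 add.assoc)
  consider "g \<in> C" "f \<in> C" | "g \<in> C" "f \<notin> C" | "g \<notin> C" "f \<notin> C" | "g \<notin> C" "f \<in> C"
    by blast
  then show ?thesis
  proof cases
    case 1
    then show ?thesis using soul_conradian f g unfolding conradian_on_def by blast
  next
    case 2
    then show ?thesis using soul_less_outer_coset f step1 by blast
  next
    case 3
    then show ?thesis using gC f step1 by blast
  next
    case 4
    then have "f + g \<notin> C" "R 0 (f + g)"
      using soul_add_left_iff outer_pos_add_soul_left g by blast+
    then show ?thesis using gC 4 step2 by blast
  qed
qed

lemma nonpreserving_in_proper_extension:
  assumes E: "convex_subgroup R E" "C \<subset> E" and m: "R 0 m" "m \<notin> E"
  shows "\<exists>p. R 0 p \<and> R p m \<and> p \<notin> C \<and> \<not> preserves_outer_signs p"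
proof -
  have "\<not> conradian_on R E" using soul_maximal E by blast
  then obtain f g where fg: "f \<in> E" "g \<in> E" "R 0 f" "R 0 g"
    and no_step: "\<not> (\<exists>n\<ge>1. R g (f + gpow g n))"
    unfolding conradian_on_def by blast
  have "g \<notin> C" "\<not> preserves_outer_signs g"
    using conradian_step[OF fg(3,4)] no_step unfolding preserves_outer_signs_def by blast+
  moreover have "R g m"
  proof -
    have "0 \<in> E" using E unfolding convex_subgroup_def is_subgroup_def by blast
    then have "\<not> R m g" using E m fg unfolding convex_subgroup_def by blast
    moreover have "m \<noteq> g" using fg m by blast
    ultimately show ?thesis using ord_linear by blast
  qed
  ultimately show ?thesis using fg by blast
qed

definition in_all_convex_extensions :: "'a \<Rightarrow> bool" where
  "in_all_convex_extensions q \<longleftrightarrow> (\<forall>E. convex_subgroup R E \<and> C \<subset> E \<longrightarrow> q \<in> E)"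

lemma in_all_convex_extensions_neg:
  "in_all_convex_extensions q \<Longrightarrow> in_all_convex_extensions (- q)"
  unfolding in_all_convex_extensions_def convex_subgroup_def is_subgroup_def by blast

lemma in_all_convex_extensions_le:
  assumes "in_all_convex_extensions m" "R 0 p" "le p m"
  shows "in_all_convex_extensions p"
  using assms unfolding in_all_convex_extensions_def convex_subgroup_def is_subgroup_def le_def
  by blast

lemma soul_subset_if_interval:
  assumes H: "is_subgroup H" and t: "R 0 t" "t \<notin> C"
    and interval: "\<And>y. R 0 y \<Longrightarrow> R y t \<Longrightarrow> y \<in> H"
  shows "C \<subseteq> H"
proof
  fix c assume c: "c \<in> C"
  show "c \<in> H"
  proof (cases "c = 0")
    case True
    then show ?thesis using subgroup_zero[OF H] by simp
  next
    case False
    have "magnitude c \<in> C" using c soul_neg unfolding magnitude_def by simp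
    then have "magnitude c \<in> H"
      using interval magnitude_pos[OF False] soul_less_outer_pos[OF t(2,1)] by blast
    then show ?thesis using subgroup_neg_iff[OF H] unfolding magnitude_def by (auto split: if_splits)
  qed
qed

lemma mem_subgroup_if_interval:
  assumes H: "is_subgroup H" and t: "R 0 t" "t \<in> H" "t \<notin> C"
    and interval: "\<And>y. R 0 y \<Longrightarrow> R y t \<Longrightarrow> y \<in> H"
    and q: "in_all_convex_extensions q"
  shows "q \<in> H"
proof -
  have "C \<subseteq> convex_core H"
    using soul_subset_convex_core soul_subset_if_interval[OF H t(1,3) interval] by blast
  moreover have "t \<in> convex_core H" using mem_convex_coreI[OF H t(1,2) interval] .
  ultimately have "q \<in> convex_core H"
    using q t(3) convex_subgroup_convex_core[OF H] unfolding in_all_convex_extensions_def by blast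
  then show ?thesis using convex_core_subset by blast
qed

lemma conj_interval_in_soul:
  assumes q: "preserves_outer_signs q" and c: "c \<in> C"
    and y: "R 0 y" "R y (- q + c + q)"
  shows "q + y + - q \<in> C"
proof (rule ccontr)
  define g where "g = q + y + - q"
  assume g: "g \<notin> C"
  have gq: "g + q = q + y" unfolding g_def by (simp add: add.assoc)
  have "R q (g + q)" using ord_add_left[OF y(1), of q] gq by simp
  then have "R 0 g" using q g unfolding preserves_outer_signs_def by blast
  then have "R 0 (- c + g)" using outer_pos_add_soul_left g soul_neg c by blast
  moreover have "- c + g \<notin> C" using g soul_add_left_iff soul_neg c by blast
  ultimately have "R q (- c + g + q)" using q unfolding preserves_outer_signs_def by blast
  moreover have "R (g + q) (c + q)"
    using ord_add_left[OF y(2), of q] gq by (simp add: add.assoc[symmetric])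
  then have "R (- c + g + q) q"
    using ord_add_left[of "g + q" "c + q" "- c"] by (simp add: add.assoc[symmetric])
  ultimately show False using ord_asym by blast
qed

lemma preserving_normalizes_soul:
  assumes q: "preserves_outer_signs q" "q \<notin> C" "in_all_convex_extensions q"
    and c: "c \<in> C"
  shows "- q + c + q \<in> C"
proof (rule ccontr)
  assume "- q + c + q \<notin> C"
  define c' where "c' = (if R 0 (- q + c + q) then c else - c)"
  define t where "t = - q + c' + q"
  have "- (- q + c + q) = - q + - c + q" by (simp add: minus_add add.assoc)
  then have "t = magnitude (- q + c + q)" unfolding t_def c'_def magnitude_def by simp
  then have t: "R 0 t" "t \<notin> C"
    using magnitude_pos magnitude_outer \<open>- q + c + q \<notin> C\<close> soul_zero by metis+
  have c': "c' \<in> C" unfolding c'_def using c soul_neg by simp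
  define H where "H = {y. q + y + - q \<in> C}"
  have H: "is_subgroup H" unfolding H_def using subgroup_conj_preimage[OF soul_subgroup] .
  have "t \<in> H" unfolding H_def t_def using c' by (simp add: add.assoc)
  moreover have "\<And>y. R 0 y \<Longrightarrow> R y t \<Longrightarrow> y \<in> H"
    unfolding H_def t_def using conj_interval_in_soul[OF q(1) c'] by blast
  ultimately have "q \<in> H" using mem_subgroup_if_interval[OF H t(1) _ t(2) _ q(3)] by blast
  then show False using q(2) unfolding H_def by (simp add: add.assoc)
qed

lemma preserving_neg:
  assumes q: "preserves_outer_signs q" and normal: "\<And>c. c \<in> C \<Longrightarrow> - q + c + q \<in> C"
  shows "preserves_outer_signs (- q)"
  unfolding preserves_outer_signs_def
proof (intro allI impI)
  fix g assume g: "g \<notin> C"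
  define g' where "g' = q + g + - q"
  have "- q + g' + q = g" unfolding g'_def by (simp add: add.assoc)
  then have "g' \<notin> C" using normal g by metis
  then have "R q (g' + q) \<longleftrightarrow> R 0 g'" using q unfolding preserves_outer_signs_def by blast
  moreover have "R q (g' + q) \<longleftrightarrow> R 0 g"
    using ord_add_left_iff[of q 0 g] unfolding g'_def by (simp add: add.assoc)
  moreover have "R (- q) (g + - q) \<longleftrightarrow> R 0 g'"
    using ord_add_left_iff[of q "- q" "g + - q", symmetric] unfolding g'_def
    by (simp add: add.assoc)
  ultimately show "R (- q) (g + - q) \<longleftrightarrow> R 0 g" by blast
qed

definition outer_cone :: "'a set" where
  "outer_cone = {h. h \<notin> C \<and> R 0 h}"

definition cone_normalizer :: "'a set" where
  "cone_normalizer =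
     {x. \<forall>h\<in>outer_cone. - x + h + x \<in> outer_cone \<and> x + h + - x \<in> outer_cone}"

lemma conj_outer_cone:
  assumes q: "preserves_outer_signs q" and normal: "\<And>c. c \<in> C \<Longrightarrow> q + c + - q \<in> C"
    and h: "h \<in> outer_cone"
  shows "- q + h + q \<in> outer_cone"
proof -
  have "q + (- q + h + q) + - q = h" by (simp add: add.assoc)
  moreover have "h \<notin> C" using h unfolding outer_cone_def by blast
  ultimately have "- q + h + q \<notin> C" using normal by metis
  moreover have "R q (h + q)" using q h unfolding outer_cone_def preserves_outer_signs_def by blast
  then have "R 0 (- q + h + q)" using ord_add_left[of q "h + q" "- q"] by (simp add: add.assoc)
  ultimately show ?thesis unfolding outer_cone_def by blast
qed

lemma subgroup_cone_normalizer: "is_subgroup cone_normalizer"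
  unfolding is_subgroup_def
proof (intro conjI ballI)
  show "0 \<in> cone_normalizer" unfolding cone_normalizer_def by simp
next
  fix x y assume x: "x \<in> cone_normalizer" and y: "y \<in> cone_normalizer"
  have "- (x + y) + h + (x + y) \<in> outer_cone \<and> (x + y) + h + - (x + y) \<in> outer_cone"
    if h: "h \<in> outer_cone" for h
  proof -
    have "- y + (- x + h + x) + y \<in> outer_cone" "x + (y + h + - y) + - x \<in> outer_cone"
      using x y h unfolding cone_normalizer_def by blast+
    moreover have "- (x + y) + h + (x + y) = - y + (- x + h + x) + y"
      and "(x + y) + h + - (x + y) = x + (y + h + - y) + - x"
      by (simp_all add: minus_add add.assoc)
    ultimately show ?thesis by simp
  qed
  then show "x + y \<in> cone_normalizer" unfolding cone_normalizer_def by blast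
next
  fix x assume "x \<in> cone_normalizer"
  then show "- x \<in> cone_normalizer" unfolding cone_normalizer_def by simp
qed

lemma soul_subset_cone_normalizer: "C \<subseteq> cone_normalizer"
proof -
  have conj: "- x + h + x \<in> outer_cone" if x: "x \<in> C" and h: "h \<in> outer_cone" for x h
  proof -
    have h': "h \<notin> C" "R 0 h" using h unfolding outer_cone_def by blast+
    have "R x (h + x)" using soul_less_outer_coset[OF h' x x] .
    then have "R 0 (- x + h + x)" using ord_add_left[of x "h + x" "- x"] by (simp add: add.assoc)
    moreover have "- x + h + x \<notin> C"
      using h'(1) soul_add_left_iff[of "- x"] soul_add_right_iff[OF x] soul_neg[OF x] by simp
    ultimately show ?thesis unfolding outer_cone_def by blast
  qed
  show ?thesis
  proof
    fix c assume c: "c \<in> C"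
    then have "- c \<in> C" by (rule soul_neg)
    then show "c \<in> cone_normalizer"
      using conj[OF c] conj[of "- c"] unfolding cone_normalizer_def by simp
  qed
qed

lemma conradian_cone_normalizer: "conradian_on R cone_normalizer"
  unfolding conradian_on_def
proof (intro ballI impI)
  fix f g assume "g \<in> cone_normalizer" "R 0 f" "R 0 g"
  moreover have "R g (h + g)" if "h \<in> outer_cone" for h
    using \<open>g \<in> cone_normalizer\<close> that ord_add_left[of 0 "- g + h + g" g]
    unfolding cone_normalizer_def outer_cone_def by (simp add: add.assoc[symmetric])
  ultimately show "\<exists>n\<ge>1. R g (f + gpow g n)"
    using conradian_step unfolding outer_cone_def by blast
qed

lemma preserving_in_cone_normalizer:
  assumes p: "preserves_outer_signs p" "p \<notin> C" "in_all_convex_extensions p"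
  shows "p \<in> cone_normalizer"
proof -
  have normal: "- p + c + p \<in> C" if "c \<in> C" for c
    using preserving_normalizes_soul[OF p that] .
  have "preserves_outer_signs (- p)" using preserving_neg[OF p(1) normal] .
  then have normal': "p + c + - p \<in> C" if "c \<in> C" for c
    using preserving_normalizes_soul[of "- p" c] in_all_convex_extensions_neg[OF p(3)]
      p(2) soul_neg_iff that by simp
  show ?thesis
    unfolding cone_normalizer_def
    using conj_outer_cone[OF p(1) normal'] conj_outer_cone[OF \<open>preserves_outer_signs (- p)\<close>]
      normal by simp
qed

lemma exists_nonpreserving_below:
  assumes m: "R 0 m" "m \<notin> C"
  shows "\<exists>p. R 0 p \<and> le p m \<and> p \<notin> C \<and> \<not> preserves_outer_signs p"
proof (cases "in_all_convex_extensions m")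
  case False
  then obtain E where "convex_subgroup R E" "C \<subset> E" "m \<notin> E"
    unfolding in_all_convex_extensions_def by blast
  then show ?thesis using nonpreserving_in_proper_extension m(1) unfolding le_def by blast
next
  case True
  show ?thesis
  proof (rule ccontr)
    assume all_preserving: "\<not> ?thesis"
    have "y \<in> cone_normalizer" if "between 0 y m" for y
    proof -
      have "y = 0 \<or> (R 0 y \<and> le y m)"
        using that m(1) ord_asym ord_trans unfolding between_def le_def by blast
      moreover have "y \<in> cone_normalizer" if "R 0 y" "le y m" "y \<notin> C"
        using that all_preserving preserving_in_cone_normalizer
          in_all_convex_extensions_le[OF True] by blast
      ultimately show ?thesis using soul_zero soul_subset_cone_normalizer by blast
    qed
    then have "m \<in> convex_core cone_normalizer" unfolding convex_core_def by blast
    moreover have "convex_core cone_normalizer = C"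
    proof (rule soul_maximal)
      show "convex_subgroup R (convex_core cone_normalizer)"
        using convex_subgroup_convex_core[OF subgroup_cone_normalizer] .
      show "conradian_on R (convex_core cone_normalizer)"
        using conradian_cone_normalizer convex_core_subset unfolding conradian_on_def by blast
      show "C \<subseteq> convex_core cone_normalizer"
        using soul_subset_convex_core[OF soul_subset_cone_normalizer] .
    qed
    ultimately show False using m by blast
  qed
qed

section \<open>Limits of conjugate orderings\<close>

lemma conj_ord_zero_iff: "conj_ord R (- p) 0 g \<longleftrightarrow> R p (g + p)"
  using ord_add_left_iff[of "- p" p "g + p"] unfolding conj_ord_def by (simp add: add.assoc)

definition window :: "'a set \<Rightarrow> 'a set" where
  "window F = {p. (\<forall>g\<in>F. g \<notin> C \<longrightarrow> (R p (g + p) \<longleftrightarrow> R 0 g)) \<and> \<not> preserves_outer_signs p}"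

lemma window_nonempty:
  assumes F: "finite F" and "C \<noteq> UNIV"
  shows "window F \<noteq> {}"
proof -
  obtain x where "x \<notin> C" using assms(2) by blast
  have "finite (insert x (F - C))" "insert x (F - C) \<noteq> {}" using F by auto
  then obtain m where m: "m \<in> magnitude ` insert x (F - C)"
    and least: "\<forall>g\<in>F - C. le m (magnitude g)"
    using finite_has_least[of "magnitude ` insert x (F - C)"] by blast
  then obtain g0 where "g0 \<notin> C" "m = magnitude g0" using \<open>x \<notin> C\<close> by blast
  then have "R 0 m" "m \<notin> C" using magnitude_pos magnitude_outer soul_zero by metis+
  then obtain p where p: "R 0 p" "le p m" "\<not> preserves_outer_signs p"
    using exists_nonpreserving_below by blast
  have "R p (g + p) \<longleftrightarrow> R 0 g" if "g \<in> F" "g \<notin> C" for g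
    using conj_sign_eq_if_small[OF p(1)] le_trans[OF p(2)] least that soul_zero by blast
  then show ?thesis using p(3) unfolding window_def by blast
qed

lemma window_antimono: "F \<subseteq> F' \<Longrightarrow> window F' \<subseteq> window F"
  unfolding window_def by blast

lemma limit_cone:
  assumes limit: "\<And>F. finite F \<Longrightarrow> \<exists>p. \<forall>g\<in>F. R p (g + p) \<longleftrightarrow> \<tau> g"
  shows "left_ordering_on H (\<lambda>x y. \<tau> (- x + y))"
proof (rule left_ordering_of_cone)
  obtain p where "R p (0 + p) \<longleftrightarrow> \<tau> 0" using limit[of "{0}"] by blast
  then show "\<not> \<tau> 0" using ord_irrefl by simp
next
  fix a b assume "\<tau> a" "\<tau> b"
  moreover obtain p where p: "\<forall>g\<in>{a, b, a + b}. R p (g + p) \<longleftrightarrow> \<tau> g"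
    using limit[of "{a, b, a + b}"] by blast
  ultimately have "R p (a + p)" "R (a + p) (a + (b + p))" using ord_add_left by auto
  then have "R p (a + b + p)" using ord_trans by (simp add: add.assoc)
  then show "\<tau> (a + b)" using p by blast
next
  fix a :: 'a assume "a \<noteq> 0"
  obtain p where p: "\<forall>g\<in>{a, - a}. R p (g + p) \<longleftrightarrow> \<tau> g"
    using limit[of "{a, - a}"] by blast
  have "a + p \<noteq> p" using \<open>a \<noteq> 0\<close> by (metis add_0 add_right_cancel)
  then have "R p (a + p) \<or> R (a + p) p" using ord_linear by blast
  moreover have "R (a + p) p \<Longrightarrow> R p (- a + p)"
    using ord_add_left[of "a + p" p "- a"] by (simp add: add.assoc[symmetric])
  ultimately show "\<tau> a \<or> \<tau> (- a)" using p by blast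
qed

lemma limit_accumulation:
  assumes limit: "\<And>F. finite F \<Longrightarrow> \<exists>p\<in>window F. \<forall>g\<in>F. R p (g + p) \<longleftrightarrow> \<tau> g"
  shows "accumulation_ordering (ext_ord R C (\<lambda>x y. \<tau> (- x + y))) (range (conj_ord R))"
  unfolding accumulation_ordering_def
proof (intro allI impI)
  let ?L = "ext_ord R C (\<lambda>x y. \<tau> (- x + y))"
  have L: "?L 0 g \<longleftrightarrow> (g \<notin> C \<and> R 0 g) \<or> (g \<in> C \<and> \<tau> g)" for g
    unfolding ext_ord_def by simp
  fix F :: "'a set" assume "finite F"
  then obtain p where p: "p \<in> window F" "\<forall>g\<in>F. R p (g + p) \<longleftrightarrow> \<tau> g" using limit by blast
  have "agree_on F ?L (conj_ord R (- p))"
    using p L conj_ord_zero_iff unfolding agree_on_def window_def by auto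
  moreover have "conj_ord R (- p) \<noteq> ?L"
  proof
    assume eq: "conj_ord R (- p) = ?L"
    obtain g where "g \<notin> C" "\<not> (R p (g + p) \<longleftrightarrow> R 0 g)"
      using p(1) unfolding window_def preserves_outer_signs_def by blast
    then show False using L[of g] conj_ord_zero_iff[of p g] eq by simp
  qed
  ultimately show "\<exists>S\<in>range (conj_ord R). S \<noteq> ?L \<and> agree_on F ?L S" by blast
qed

end

theorem mainTheorem10:
  fixes R :: "'g::group_add \<Rightarrow> 'g \<Rightarrow> bool" and C :: "'g set"
  assumes "left_ordering R"
    and "isolated_ordering R"
    and "\<not> conradian_on R UNIV"
    and "conradian_soul R C"
  shows "\<exists>Rc. left_ordering_on C Rc \<and>
           accumulation_ordering (ext_ord R C Rc) (range (conj_ord R))"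
proof -
  interpret soul_ordered_group R C using assms(1,4) by unfold_locales
  have "C \<noteq> UNIV" using soul_conradian assms(3) by auto
  then obtain \<tau> where \<tau>: "\<And>F. finite F \<Longrightarrow> \<exists>p\<in>window F. \<forall>g\<in>F. R p (g + p) \<longleftrightarrow> \<tau> g"
    using exists_finitely_approximated_limit[of window "\<lambda>p g. R p (g + p)"]
      window_nonempty window_antimono by metis
  have "left_ordering_on C (\<lambda>x y. \<tau> (- x + y))" using limit_cone \<tau> by meson
  moreover have "accumulation_ordering (ext_ord R C (\<lambda>x y. \<tau> (- x + y))) (range (conj_ord R))"
    using limit_accumulation \<tau> by blast
  ultimately show ?thesis by blast
qed

end
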